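(* Let $T$ be a continuous linear operator on a topological vector space $X$ and let $\mathcal F$ be a Furstenberg family. If $T$ is hypercyclic and has the $\mathscr P_{\mathcal F}$ property, then $T$ is $b\mathcal F$-hypercyclic.
   Context: $\mathbb N$ denotes the nonnegative integers. A Furstenberg family is a nonempty collection $\mathcal F\subseteq\mathcal P(\mathbb N)$ with $\emptyset\notin\mathcal F$ which is hereditarily upward. The block family $b\mathcal F$: $S\in b\mathcal F$ iff there is $F\in\mathcal F$ such that for every finite $R\subseteq F$ there is $n\in\mathbb N$ with $R+n\subseteq S$. $N_T(x,U)=\{n\in\mathbb N:T^nx\in U\}$. For a family $\mathcal G$, $T$ is $\mathcal G$-hypercyclic if there is $x$ with $N_T(x,U)\in\mathcal G$ for every nonempty open $U$; hypercyclic means having a vector with dense orbit. $T$ has the $\mathscr P_{\mathcal F}$ property if for every nonempty open $U\subseteq X$ there is $x\in X$ with $N_T(x,U)\in\mathcal F$. *)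

theory Defs
  imports "HOL-Analysis.Analysis"
begin

definition tvs :: "'a::{real_vector, t2_space} itself \<Rightarrow> bool" where
  "tvs _ \<longleftrightarrow>
     continuous_on UNIV (\<lambda>p::'a \<times> 'a. fst p + snd p) \<and>
     continuous_on UNIV (\<lambda>p::real \<times> 'a. fst p *\<^sub>R snd p)"

definition furstenberg_family :: "nat set set \<Rightarrow> bool" where
  "furstenberg_family F \<longleftrightarrow>
     F \<noteq> {} \<and> {} \<notin> F \<and> (\<forall>A B. A \<in> F \<and> A \<subseteq> B \<longrightarrow> B \<in> F)"

definition block_family :: "nat set set \<Rightarrow> nat set set" where
  "block_family F = {S. \<exists>A\<in>F. \<forall>R. finite R \<and> R \<subseteq> A \<longrightarrow>
                          (\<exists>n. (\<lambda>r. r + n) ` R \<subseteq> S)}"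

definition return_set :: "('a \<Rightarrow> 'a) \<Rightarrow> 'a \<Rightarrow> 'a set \<Rightarrow> nat set" where
  "return_set T x U = {n. (T ^^ n) x \<in> U}"

definition hypercyclic :: "('a::topological_space \<Rightarrow> 'a) \<Rightarrow> bool" where
  "hypercyclic T \<longleftrightarrow> (\<exists>x. closure (range (\<lambda>n. (T ^^ n) x)) = UNIV)"

definition family_hypercyclic :: "nat set set \<Rightarrow> ('a::topological_space \<Rightarrow> 'a) \<Rightarrow> bool" where
  "family_hypercyclic G T \<longleftrightarrow>
     (\<exists>x. \<forall>U. open U \<and> U \<noteq> {} \<longrightarrow> return_set T x U \<in> G)"

definition P_property :: "nat set set \<Rightarrow> ('a::topological_space \<Rightarrow> 'a) \<Rightarrow> bool" where
  "P_property F T \<longleftrightarrow>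
     (\<forall>U. open U \<and> U \<noteq> {} \<longrightarrow> (\<exists>x. return_set T x U \<in> F))"

end

theory Submission
  imports Defs
begin

text \<open>Let \<open>x\<close> have a dense orbit, let \<open>U\<close> be open and pick \<open>y\<close> with
  \<open>N(y, U) \<in> F\<close>. For a finite \<open>R \<subseteq> N(y, U)\<close> the set \<open>\<Inter>r\<in>R. T\<^sup>-\<^sup>r U\<close> is an open
  neighbourhood of \<open>y\<close>, so the orbit of \<open>x\<close> enters it at some time \<open>n\<close>, and then
  \<open>R + n \<subseteq> N(x, U)\<close>. Hence \<open>N(x, U) \<in> b F\<close>.\<close>

lemma continuous_on_funpow:
  fixes T :: "'a::topological_space \<Rightarrow> 'a"
  assumes "continuous_on UNIV T"
  shows "continuous_on UNIV (T ^^ n)"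
proof (induction n)
  case 0
  then show ?case by (simp add: id_def continuous_on_id)
next
  case (Suc n)
  have "continuous_on UNIV (T \<circ> (T ^^ n))"
    using Suc assms by (intro continuous_on_compose) (auto intro: continuous_on_subset)
  then show ?case by simp
qed

lemma open_vimage_return_pattern:
  fixes T :: "'a::topological_space \<Rightarrow> 'a"
  assumes "continuous_on UNIV T" "open U" "finite R"
  shows "open (\<Inter>r\<in>R. (T ^^ r) -` U)"
  using assms continuous_on_funpow[OF assms(1)]
  by (intro open_INT) (auto simp: continuous_on_open_vimage)

lemma dense_orbit_shifts_return_pattern:
  fixes T :: "'a::topological_space \<Rightarrow> 'a"
  assumes "continuous_on UNIV T"
    and dense: "closure (range (\<lambda>n. (T ^^ n) x)) = UNIV"
    and "open U" "finite R" "R \<subseteq> return_set T y U"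
  shows "\<exists>n. (\<lambda>r. r + n) ` R \<subseteq> return_set T x U"
proof -
  define V where "V = (\<Inter>r\<in>R. (T ^^ r) -` U)"
  have "open V"
    unfolding V_def using assms(1,3,4) by (rule open_vimage_return_pattern)
  moreover have "y \<in> V"
    using assms(5) unfolding V_def return_set_def by auto
  ultimately have "V \<inter> range (\<lambda>n. (T ^^ n) x) \<noteq> {}"
    using open_Int_closure_eq_empty[of V "range (\<lambda>n. (T ^^ n) x)"] dense by auto
  then obtain n where n: "(T ^^ n) x \<in> V" by auto
  have "(T ^^ (r + n)) x \<in> U" if "r \<in> R" for r
    using n that unfolding V_def by (simp add: funpow_add)
  then have "(\<lambda>r. r + n) ` R \<subseteq> return_set T x U"
    unfolding return_set_def by auto
  then show ?thesis ..
qed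

lemma dense_orbit_return_set_in_block_family:
  fixes T :: "'a::topological_space \<Rightarrow> 'a"
  assumes "continuous_on UNIV T"
    and "closure (range (\<lambda>n. (T ^^ n) x)) = UNIV"
    and "open U" "return_set T y U \<in> F"
  shows "return_set T x U \<in> block_family F"
  unfolding block_family_def
  using assms(4) dense_orbit_shifts_return_pattern[OF assms(1,2,3)] by blast

theorem mainTheorem5:
  fixes T :: "'a::{real_vector, t2_space} \<Rightarrow> 'a"
    and F :: "nat set set"
  assumes "tvs TYPE('a)"
    and "linear T" and "continuous_on UNIV T"
    and "furstenberg_family F"
    and "hypercyclic T"
    and "P_property F T"
  shows "family_hypercyclic (block_family F) T"
proof -
  obtain x where x: "closure (range (\<lambda>n. (T ^^ n) x)) = UNIV"
    using \<open>hypercyclic T\<close> unfolding hypercyclic_def by blast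
  have "return_set T x U \<in> block_family F" if U: "open U" "U \<noteq> {}" for U
  proof -
    obtain y where "return_set T y U \<in> F"
      using \<open>P_property F T\<close> U unfolding P_property_def by blast
    with \<open>continuous_on UNIV T\<close> x \<open>open U\<close> show ?thesis
      by (rule dense_orbit_return_set_in_block_family)
  qed
  then show ?thesis unfolding family_hypercyclic_def by auto
qed

end
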